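(* Let $I\subset\mathbb{R}$ be an interval and $(Y(s))_{s\in I}$ a centered Gaussian process whose covariance $r(s,t)=\mathbb{E}[Y(s)Y(t)]$ admits partial derivatives $r^{(a,b)}=\partial_1^a\partial_2^b r$ for $a,b\in\{0,1\}$ (so that $r^{(a,b)}(s,t)=\mathbb{E}[Y^{(a)}(s)Y^{(b)}(t)]$). Assume there is a constant $C$ with $|r^{(a,b)}(s,t)|\le C$ for all $a,b\in\{0,1\}$ and $s,t\in I$. Then for all $s,\tau$ with $s,s+\tau\in I$, \[\big|\det\Sigma(s,s+\tau)-\det\Omega(s)\,\det\Omega(s+\tau)\big|\le 20\,C^2M(\tau)^2 .\]
   Context: $\Omega(s)=\operatorname{Cov}(Y(s),Y'(s))$ is the $2\times2$ covariance matrix, with entries $r(s,s)$, $r^{(1,0)}(s,s)$, $r^{(1,1)}(s,s)$. $\Sigma(s,t)=\operatorname{Cov}(Y(s),Y(t),Y'(s),Y'(t))$ is the $4\times 4$ covariance matrix of this vector (entries given by the appropriate $r^{(a,b)}$). $M(\tau)=\sup_{s}\sup_{a,b\in\{0,1\}}|r^{(a,b)}(s,s+\tau)|$, the supremum over $s$ with $s,s+\tau\in I$. *)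

theory Defs
  imports "HOL-Probability.Probability"
begin

definition gaussian_process :: "'a measure \<Rightarrow> real set \<Rightarrow> (real \<Rightarrow> 'a \<Rightarrow> real) \<Rightarrow> bool" where
  "gaussian_process M I Y \<longleftrightarrow>
     (\<forall>t\<in>I. Y t \<in> borel_measurable M) \<and>
     (\<forall>F c. finite F \<longrightarrow> F \<subseteq> I \<longrightarrow>
        (\<exists>a. AE \<omega> in M. (\<Sum>t\<in>F. c t * Y t \<omega>) = a) \<or>
        (\<exists>\<mu> \<sigma>. \<sigma> > 0 \<and> distributed M lborel (\<lambda>\<omega>. \<Sum>t\<in>F. c t * Y t \<omega>) (normal_density \<mu> \<sigma>)))"

text \<open>Here rd a b is the covariance derivative r^{(a,b)} (a,b in {0,1}).
  Omega(s) = Cov(Y(s),Y'(s)).\<close>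
definition Omega :: "(nat \<Rightarrow> nat \<Rightarrow> real \<Rightarrow> real \<Rightarrow> real) \<Rightarrow> real \<Rightarrow> real^2^2" where
  "Omega rd s = vector [vector [rd 0 0 s s, rd 0 1 s s],
                        vector [rd 1 0 s s, rd 1 1 s s]]"

text \<open>Sigma(s,t) = Cov(Y(s),Y(t),Y'(s),Y'(t)).\<close>
definition Sigma :: "(nat \<Rightarrow> nat \<Rightarrow> real \<Rightarrow> real \<Rightarrow> real) \<Rightarrow> real \<Rightarrow> real \<Rightarrow> real^4^4" where
  "Sigma rd s t = vector
     [vector [rd 0 0 s s, rd 0 0 s t, rd 0 1 s s, rd 0 1 s t],
      vector [rd 0 0 t s, rd 0 0 t t, rd 0 1 t s, rd 0 1 t t],
      vector [rd 1 0 s s, rd 1 0 s t, rd 1 1 s s, rd 1 1 s t],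
      vector [rd 1 0 t s, rd 1 0 t t, rd 1 1 t s, rd 1 1 t t]]"

definition Mtau :: "(nat \<Rightarrow> nat \<Rightarrow> real \<Rightarrow> real \<Rightarrow> real) \<Rightarrow> real set \<Rightarrow> real \<Rightarrow> real" where
  "Mtau rd I \<tau> = Sup {\<bar>rd a b s (s + \<tau>)\<bar> | a b s. a \<le> 1 \<and> b \<le> 1 \<and> s \<in> I \<and> s + \<tau> \<in> I}"

end

theory Submission
  imports Defs
begin

text \<open>
  Bounding every entry of the two diagonal blocks of Sigma(s, s + tau) by C and every entry of
  the off-diagonal blocks by M(tau), the 4x4 determinant expansion writes
  det Sigma - det Omega(s) det Omega(s + tau) as 20 monomials, each with two off-diagonal factors.
  The entries r^(a,b)(s + tau, s) are controlled by M(tau) only after transposing them to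
  r^(b,a)(s, s + tau). For r^(1,1) this is the symmetry of the mixed partial derivatives of r,
  which for a kernel that is merely differentiable is not automatic: it comes from the Hilbert
  structure of L2. The difference quotients of Y at s and at s + tau form two bounded sequences
  in L2 whose mutual inner products are the second difference quotients of r, and for bounded
  sequences both iterated limits of the inner products coincide whenever they exist. The latter
  is shown with points of almost minimal norm in the convex hulls of the tails of the first
  sequence: by the parallelogram law they form a Cauchy sequence.
\<close>

definition square_integrable :: "'a measure \<Rightarrow> ('a \<Rightarrow> real) \<Rightarrow> bool" where
  "square_integrable M f \<longleftrightarrow> f \<in> borel_measurable M \<and> integrable M (\<lambda>x. (f x)\<^sup>2)"

definition L2_inner :: "'a measure \<Rightarrow> ('a \<Rightarrow> real) \<Rightarrow> ('a \<Rightarrow> real) \<Rightarrow> real" where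
  "L2_inner M f g = (\<integral>x. f x * g x \<partial>M)"

lemma integrable_mult_square_integrable:
  assumes "square_integrable M f" "square_integrable M g"
  shows "integrable M (\<lambda>x. f x * g x)"
proof (rule Bochner_Integration.integrable_bound[of M "\<lambda>x. (f x)\<^sup>2 + (g x)\<^sup>2"])
  show "integrable M (\<lambda>x. (f x)\<^sup>2 + (g x)\<^sup>2)" "(\<lambda>x. f x * g x) \<in> borel_measurable M"
    using assms unfolding square_integrable_def by auto
  have "\<bar>f x * g x\<bar> \<le> (f x)\<^sup>2 + (g x)\<^sup>2" for x
  proof -
    have "\<bar>f x * g x\<bar> \<le> 2 * \<bar>f x\<bar> * \<bar>g x\<bar>" by (simp add: abs_mult)
    also have "\<dots> \<le> (f x)\<^sup>2 + (g x)\<^sup>2" using sum_squares_bound[of "\<bar>f x\<bar>" "\<bar>g x\<bar>"] by simp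
    finally show ?thesis .
  qed
  then show "AE x in M. norm (f x * g x) \<le> norm ((f x)\<^sup>2 + (g x)\<^sup>2)" by simp
qed

lemma square_integrable_lincomb:
  assumes "square_integrable M f" "square_integrable M g"
  shows "square_integrable M (\<lambda>x. c * f x + d * g x)"
proof -
  have "integrable M (\<lambda>x. c\<^sup>2 * (f x)\<^sup>2 + 2 * c * d * (f x * g x) + d\<^sup>2 * (g x)\<^sup>2)"
    using assms integrable_mult_square_integrable[OF assms] unfolding square_integrable_def by auto
  moreover have "(\<lambda>x. c\<^sup>2 * (f x)\<^sup>2 + 2 * c * d * (f x * g x) + d\<^sup>2 * (g x)\<^sup>2) =
      (\<lambda>x. (c * f x + d * g x)\<^sup>2)"
    by (auto simp: power2_eq_square algebra_simps)
  ultimately show ?thesis using assms unfolding square_integrable_def by auto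
qed

lemma square_integrable_diff:
  assumes "square_integrable M f" "square_integrable M g"
  shows "square_integrable M (\<lambda>x. f x - g x)"
  using square_integrable_lincomb[OF assms, of 1 "- 1"] by simp

lemma square_integrable_diff_quotient:
  assumes "square_integrable M f" "square_integrable M g"
  shows "square_integrable M (\<lambda>x. (f x - g x) / h)"
  using square_integrable_lincomb[OF assms, of "1 / h" "- 1 / h"] by (simp add: diff_divide_distrib)

lemma L2_inner_nonneg: "0 \<le> L2_inner M f f"
  unfolding L2_inner_def by (rule integral_nonneg_AE) auto

lemma L2_inner_lincomb_left:
  assumes "square_integrable M f" "square_integrable M g" "square_integrable M k"
  shows "L2_inner M (\<lambda>x. c * f x + d * g x) k = c * L2_inner M f k + d * L2_inner M g k"
proof -
  have "(\<lambda>x. (c * f x + d * g x) * k x) = (\<lambda>x. c * (f x * k x) + d * (g x * k x))"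
    by (auto simp: algebra_simps)
  then show ?thesis
    unfolding L2_inner_def
    using integrable_mult_square_integrable[OF assms(1,3)]
      integrable_mult_square_integrable[OF assms(2,3)]
    by simp
qed

lemma L2_inner_diff_left:
  assumes "square_integrable M f" "square_integrable M g" "square_integrable M k"
  shows "L2_inner M (\<lambda>x. f x - g x) k = L2_inner M f k - L2_inner M g k"
  using L2_inner_lincomb_left[OF assms, of 1 "-1"] by simp

lemma L2_inner_diff_quotients:
  assumes "square_integrable M f1" "square_integrable M f2"
    and "square_integrable M g1" "square_integrable M g2"
  shows "L2_inner M (\<lambda>x. (f1 x - f2 x) / h) (\<lambda>x. (g1 x - g2 x) / k) =
    (L2_inner M f1 g1 - L2_inner M f1 g2 - L2_inner M f2 g1 + L2_inner M f2 g2) / (h * k)"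
proof -
  have "(\<lambda>x. (f1 x - f2 x) / h * ((g1 x - g2 x) / k)) =
        (\<lambda>x. (f1 x * g1 x - f1 x * g2 x - f2 x * g1 x + f2 x * g2 x) / (h * k))"
    by (auto simp: field_simps)
  then show ?thesis
    unfolding L2_inner_def
    using assms[THEN integrable_mult_square_integrable[OF assms(1)]]
      assms[THEN integrable_mult_square_integrable[OF assms(2)]]
    by simp
qed

lemma L2_inner_lincomb:
  assumes "square_integrable M f" "square_integrable M g"
  shows "L2_inner M (\<lambda>x. c * f x + d * g x) (\<lambda>x. c' * f x + d' * g x) =
    c * c' * L2_inner M f f + (c * d' + d * c') * L2_inner M f g + d * d' * L2_inner M g g"
proof -
  have "(\<lambda>x. (c * f x + d * g x) * (c' * f x + d' * g x)) =
     (\<lambda>x. c * c' * (f x * f x) + (c * d' + d * c') * (f x * g x) + d * d' * (g x * g x))"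
    by (auto simp: algebra_simps)
  then show ?thesis
    unfolding L2_inner_def
    using integrable_mult_square_integrable[OF assms(1,1)]
      integrable_mult_square_integrable[OF assms(1,2)] integrable_mult_square_integrable[OF assms(2,2)]
    by simp
qed

lemma L2_parallelogram:
  assumes "square_integrable M f" "square_integrable M g"
  shows "L2_inner M (\<lambda>x. f x - g x) (\<lambda>x. f x - g x) =
    2 * L2_inner M f f + 2 * L2_inner M g g
      - 4 * L2_inner M (\<lambda>x. (f x + g x) / 2) (\<lambda>x. (f x + g x) / 2)"
  using L2_inner_lincomb[OF assms, of 1 "-1" 1 "-1"]
    L2_inner_lincomb[OF assms, of "1/2" "1/2" "1/2" "1/2"]
  by (simp add: add_divide_distrib)

lemma L2_Cauchy_Schwarz:
  assumes "square_integrable M f" "square_integrable M g"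
  shows "(L2_inner M f g)\<^sup>2 \<le> L2_inner M f f * L2_inner M g g"
proof -
  have quadratic: "0 \<le> L2_inner M f f - 2 * l * L2_inner M f g + l\<^sup>2 * L2_inner M g g" for l
    using L2_inner_nonneg[of M "\<lambda>x. 1 * f x + (- l) * g x"]
      L2_inner_lincomb[OF assms, of 1 "-l" 1 "-l"]
    by (simp add: power2_eq_square)
  show ?thesis
  proof (cases "L2_inner M g g = 0")
    case True
    have "L2_inner M f g = 0"
    proof (rule ccontr)
      assume "L2_inner M f g \<noteq> 0"
      then show False
        using quadratic[of "(L2_inner M f f + 1) / (2 * L2_inner M f g)"] True by simp
    qed
    then show ?thesis by (simp add: L2_inner_nonneg)
  next
    case False
    then have pos: "L2_inner M g g > 0" using L2_inner_nonneg[of M g] by simp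
    have "0 \<le> (L2_inner M f f * L2_inner M g g - (L2_inner M f g)\<^sup>2) / L2_inner M g g"
      using quadratic[of "L2_inner M f g / L2_inner M g g"] pos
      by (simp add: field_simps power2_eq_square)
    then show ?thesis using pos by (simp add: zero_le_divide_iff)
  qed
qed

lemma abs_L2_inner_le:
  assumes "square_integrable M f" "square_integrable M g" "L2_inner M f f \<le> P" "L2_inner M g g \<le> Q"
  shows "\<bar>L2_inner M f g\<bar> \<le> sqrt (P * Q)"
proof -
  have "(L2_inner M f g)\<^sup>2 \<le> P * Q"
    using L2_Cauchy_Schwarz[OF assms(1,2)] assms(3,4) L2_inner_nonneg[of M f]
      L2_inner_nonneg[of M g]
    by (meson mult_mono order_trans)
  then show ?thesis by (simp add: real_le_rsqrt)
qed

inductive_set tail_hull :: "(nat \<Rightarrow> 'a \<Rightarrow> real) \<Rightarrow> nat \<Rightarrow> ('a \<Rightarrow> real) set"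
  for a :: "nat \<Rightarrow> 'a \<Rightarrow> real" and N :: nat where
  tail_hull_base: "N \<le> j \<Longrightarrow> a j \<in> tail_hull a N"
| tail_hull_convex: "x \<in> tail_hull a N \<Longrightarrow> y \<in> tail_hull a N \<Longrightarrow> 0 \<le> u \<Longrightarrow> u \<le> 1 \<Longrightarrow>
    (\<lambda>\<omega>. u * x \<omega> + (1 - u) * y \<omega>) \<in> tail_hull a N"

lemma tail_hull_antimono: "N \<le> N' \<Longrightarrow> tail_hull a N' \<subseteq> tail_hull a N"
proof
  fix x assume "N \<le> N'" "x \<in> tail_hull a N'"
  from \<open>x \<in> tail_hull a N'\<close> show "x \<in> tail_hull a N"
    by induction (use \<open>N \<le> N'\<close> in \<open>auto intro: tail_hull.intros\<close>)
qed

lemma square_integrable_tail_hull: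
  assumes "\<And>j. square_integrable M (a j)" "x \<in> tail_hull a N"
  shows "square_integrable M x"
  using assms(2) by induction (auto intro: assms(1) square_integrable_lincomb)

lemma convex_comb_dist_le:
  fixes X Y c e u :: real
  assumes "0 \<le> u" "u \<le> 1" "\<bar>X - c\<bar> \<le> e" "\<bar>Y - c\<bar> \<le> e"
  shows "\<bar>u * X + (1 - u) * Y - c\<bar> \<le> e"
proof -
  have "u * X + (1 - u) * Y - c = u * (X - c) + (1 - u) * (Y - c)" by (simp add: algebra_simps)
  also have "\<bar>\<dots>\<bar> \<le> u * \<bar>X - c\<bar> + (1 - u) * \<bar>Y - c\<bar>"
    using assms(1,2) by (metis abs_mult abs_of_nonneg abs_triangle_ineq diff_ge_0_iff_ge)
  also have "\<dots> \<le> u * e + (1 - u) * e"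
    using assms by (intro add_mono mult_left_mono) auto
  finally show ?thesis by (simp add: algebra_simps)
qed

lemma L2_inner_tail_hull_dist_le:
  assumes "\<And>j. square_integrable M (a j)" "square_integrable M g"
    and "\<And>j. N \<le> j \<Longrightarrow> \<bar>L2_inner M (a j) g - c\<bar> \<le> e"
    and "x \<in> tail_hull a N"
  shows "\<bar>L2_inner M x g - c\<bar> \<le> e"
  using assms(4)
proof (induction rule: tail_hull.induct)
  case (tail_hull_convex x y u)
  then show ?case
    using assms(1,2) square_integrable_tail_hull[OF assms(1)]
    by (simp add: L2_inner_lincomb_left convex_comb_dist_le)
qed (use assms(3) in simp)

lemma L2_inner_tail_hull_tendsto:
  assumes "\<And>j. square_integrable M (a j)" "\<And>k. square_integrable M (b k)"
    and "\<And>j. (\<lambda>k. L2_inner M (a j) (b k)) \<longlonglongrightarrow> A j"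
    and "\<And>j. N \<le> j \<Longrightarrow> \<bar>A j - c\<bar> \<le> e"
    and "x \<in> tail_hull a N"
  shows "\<exists>\<alpha>. (\<lambda>k. L2_inner M x (b k)) \<longlonglongrightarrow> \<alpha> \<and> \<bar>\<alpha> - c\<bar> \<le> e"
  using assms(5)
proof (induction rule: tail_hull.induct)
  case (tail_hull_base j)
  then show ?case using assms(3,4) by blast
next
  case (tail_hull_convex x y u)
  then obtain \<alpha> \<beta> where "(\<lambda>k. L2_inner M x (b k)) \<longlonglongrightarrow> \<alpha>" "\<bar>\<alpha> - c\<bar> \<le> e"
    and "(\<lambda>k. L2_inner M y (b k)) \<longlonglongrightarrow> \<beta>" "\<bar>\<beta> - c\<bar> \<le> e"
    by blast
  moreover have "L2_inner M (\<lambda>\<omega>. u * x \<omega> + (1 - u) * y \<omega>) (b k) =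
      u * L2_inner M x (b k) + (1 - u) * L2_inner M y (b k)" for k
    using tail_hull_convex.hyps assms(1,2) square_integrable_tail_hull[OF assms(1)]
    by (simp add: L2_inner_lincomb_left)
  ultimately show ?case
    using tail_hull_convex.hyps(3,4)
    by (intro exI[of _ "u * \<alpha> + (1 - u) * \<beta>"]) (auto intro!: tendsto_intros convex_comb_dist_le)
qed

lemma tail_hull_minimizing_sequence:
  assumes sa: "\<And>j. square_integrable M (a j)" and ba: "\<And>j. L2_inner M (a j) (a j) \<le> R"
  obtains x d where "\<And>N. x N \<in> tail_hull a N" "d \<longlonglongrightarrow> 0"
    "\<And>N N'. N \<le> N' \<Longrightarrow> L2_inner M (\<lambda>\<omega>. x N \<omega> - x N' \<omega>) (\<lambda>\<omega>. x N \<omega> - x N' \<omega>) \<le> d N"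
proof -
  define m where "m N = Inf ((\<lambda>x. L2_inner M x x) ` tail_hull a N)" for N
  have ne: "(\<lambda>x. L2_inner M x x) ` tail_hull a N \<noteq> {}" for N
    using tail_hull_base[of N N a] by blast
  have bdd: "bdd_below ((\<lambda>x. L2_inner M x x) ` tail_hull a N)" for N
    by (rule bdd_belowI[of _ 0]) (auto simp: L2_inner_nonneg)
  have m_le: "m N \<le> L2_inner M x x" if "x \<in> tail_hull a N" for N x
    unfolding m_def using that bdd by (simp add: cInf_lower)
  have m_mono: "m N \<le> m N'" if "N \<le> N'" for N N'
    unfolding m_def using tail_hull_antimono[OF that]
    by (intro cInf_superset_mono ne bdd image_mono)
  have m_bdd: "bdd_above (range m)"
    using m_le[OF tail_hull_base] ba by (intro bdd_aboveI[of _ R]) (auto intro: order_trans)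
  define \<mu> where "\<mu> = (SUP N. m N)"
  have m_le_\<mu>: "m N \<le> \<mu>" for N unfolding \<mu>_def using m_bdd by (simp add: cSUP_upper)
  have m_tendsto: "m \<longlonglongrightarrow> \<mu>"
    unfolding \<mu>_def using m_bdd m_mono by (intro LIMSEQ_incseq_SUP) (auto simp: incseq_def)
  have "\<exists>x \<in> tail_hull a N. L2_inner M x x < m N + 1 / real (Suc N)" for N
    using cInf_lessD[OF ne, where z = "m N + 1 / real (Suc N)"] unfolding m_def by auto
  then obtain x where x: "\<And>N. x N \<in> tail_hull a N"
    and x_near: "\<And>N. L2_inner M (x N) (x N) < m N + 1 / real (Suc N)"
    by metis
  define d where "d N = 2 * (\<mu> - m N) + 4 / real (Suc N)" for N
  show thesis
  proof (rule that)
    show "x N \<in> tail_hull a N" for N by (rule x)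
    have "(\<lambda>N. 2 * (\<mu> - m N) + 4 * inverse (real (Suc N))) \<longlonglongrightarrow> 2 * (\<mu> - \<mu>) + 4 * 0"
      by (intro tendsto_intros m_tendsto LIMSEQ_inverse_real_of_nat)
    then show "d \<longlonglongrightarrow> 0" unfolding d_def by (simp add: divide_inverse)
  next
    fix N N' :: nat assume "N \<le> N'"
    have sx: "square_integrable M (x n)" for n by (rule square_integrable_tail_hull[OF sa x])
    have "(\<lambda>\<omega>. 1/2 * x N \<omega> + (1 - 1/2) * x N' \<omega>) \<in> tail_hull a N"
      using x tail_hull_antimono[OF \<open>N \<le> N'\<close>] by (intro tail_hull_convex) auto
    then have "m N \<le> L2_inner M (\<lambda>\<omega>. (x N \<omega> + x N' \<omega>) / 2) (\<lambda>\<omega>. (x N \<omega> + x N' \<omega>) / 2)"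
      using m_le by (simp add: add_divide_distrib)
    moreover have "1 / real (Suc N') \<le> 1 / real (Suc N)" using \<open>N \<le> N'\<close> by (simp add: frac_le)
    ultimately show "L2_inner M (\<lambda>\<omega>. x N \<omega> - x N' \<omega>) (\<lambda>\<omega>. x N \<omega> - x N' \<omega>) \<le> d N"
      unfolding L2_parallelogram[OF sx sx] d_def using x_near[of N] x_near[of N'] m_le_\<mu>[of N'] by simp
  qed
qed

lemma L2_inner_tail_hull_sequence_tendsto:
  assumes sa: "\<And>j. square_integrable M (a j)" and "square_integrable M g"
    and x: "\<And>N. x N \<in> tail_hull a N" and lim: "(\<lambda>j. L2_inner M (a j) g) \<longlonglongrightarrow> c"
  shows "(\<lambda>N. L2_inner M (x N) g) \<longlonglongrightarrow> c"
proof (rule LIMSEQ_I)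
  fix r :: real assume "0 < r"
  then obtain J where J: "\<And>j. J \<le> j \<Longrightarrow> \<bar>L2_inner M (a j) g - c\<bar> \<le> r / 2"
    using LIMSEQ_D[OF lim, of "r / 2"] by (metis half_gt_zero less_imp_le real_norm_def)
  show "\<exists>J. \<forall>N\<ge>J. norm (L2_inner M (x N) g - c) < r"
  proof (intro exI allI impI)
    fix N assume "J \<le> N"
    then have "x N \<in> tail_hull a J" using x tail_hull_antimono by blast
    then have "\<bar>L2_inner M (x N) g - c\<bar> \<le> r / 2"
      using L2_inner_tail_hull_dist_le[where a = a and g = g, OF sa \<open>square_integrable M g\<close> J]
      by blast
    then show "norm (L2_inner M (x N) g - c) < r" using \<open>0 < r\<close> by simp
  qed
qed

lemma L2_inner_iterated_limits_eq:
  assumes sa: "\<And>j. square_integrable M (a j)" and sb: "\<And>k. square_integrable M (b k)"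
    and ba: "\<And>j. L2_inner M (a j) (a j) \<le> R" and bb: "\<And>k. L2_inner M (b k) (b k) \<le> R"
    and A: "\<And>j. (\<lambda>k. L2_inner M (a j) (b k)) \<longlonglongrightarrow> A j" "A \<longlonglongrightarrow> L1"
    and B: "\<And>k. (\<lambda>j. L2_inner M (a j) (b k)) \<longlonglongrightarrow> B k" "B \<longlonglongrightarrow> L2"
  shows "L1 = L2"
proof -
  obtain x d where x: "\<And>N. x N \<in> tail_hull a N" and "d \<longlonglongrightarrow> 0"
    and dist: "\<And>N N'. N \<le> N' \<Longrightarrow> L2_inner M (\<lambda>\<omega>. x N \<omega> - x N' \<omega>) (\<lambda>\<omega>. x N \<omega> - x N' \<omega>) \<le> d N"
    using tail_hull_minimizing_sequence[where a = a, OF sa ba] by blast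
  have sx: "square_integrable M (x N)" for N
    by (rule square_integrable_tail_hull[where a = a, OF sa x])
  have xb: "\<bar>L2_inner M (x N) (b k) - B k\<bar> \<le> sqrt (d N * R)" for N k
  proof (rule tendsto_upperbound)
    show "(\<lambda>N'. \<bar>L2_inner M (x N) (b k) - L2_inner M (x N') (b k)\<bar>)
        \<longlonglongrightarrow> \<bar>L2_inner M (x N) (b k) - B k\<bar>"
      by (intro tendsto_intros L2_inner_tail_hull_sequence_tendsto[where a = a, OF sa sb x B(1)])
    have "\<bar>L2_inner M (x N) (b k) - L2_inner M (x N') (b k)\<bar> \<le> sqrt (d N * R)" if "N \<le> N'" for N'
    proof -
      have "\<bar>L2_inner M (\<lambda>\<omega>. x N \<omega> - x N' \<omega>) (b k)\<bar> \<le> sqrt (d N * R)"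
        by (intro abs_L2_inner_le square_integrable_diff sx sb dist that bb)
      then show ?thesis by (simp add: L2_inner_diff_left sx sb)
    qed
    then show "\<forall>\<^sub>F N' in sequentially.
        \<bar>L2_inner M (x N) (b k) - L2_inner M (x N') (b k)\<bar> \<le> sqrt (d N * R)"
      unfolding eventually_sequentially by blast
  qed simp
  have "(\<lambda>N. sqrt (d N * R)) \<longlonglongrightarrow> sqrt (0 * R)" by (intro tendsto_intros \<open>d \<longlonglongrightarrow> 0\<close>)
  then have sqrt_d: "(\<lambda>N. sqrt (d N * R)) \<longlonglongrightarrow> 0" by simp
  have close: "\<bar>L1 - L2\<bar> \<le> 2 * \<epsilon>" if "\<epsilon> > 0" for \<epsilon>
  proof -
    obtain J1 where J1: "\<And>j. J1 \<le> j \<Longrightarrow> \<bar>A j - L1\<bar> \<le> \<epsilon>"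
      using LIMSEQ_D[OF A(2) \<open>\<epsilon> > 0\<close>] by (metis less_imp_le real_norm_def)
    obtain J2 where J2: "\<And>N. J2 \<le> N \<Longrightarrow> sqrt (d N * R) < \<epsilon>"
      using order_tendstoD(2)[OF sqrt_d \<open>\<epsilon> > 0\<close>] unfolding eventually_sequentially by blast
    define N where "N = max J1 J2"
    have "x N \<in> tail_hull a J1" using x tail_hull_antimono[of J1 N a] unfolding N_def by auto
    then obtain \<alpha> where \<alpha>: "(\<lambda>k. L2_inner M (x N) (b k)) \<longlonglongrightarrow> \<alpha>" "\<bar>\<alpha> - L1\<bar> \<le> \<epsilon>"
      using L2_inner_tail_hull_tendsto[where a = a and b = b, OF sa sb A(1) J1] by blast
    have "(\<lambda>k. \<bar>L2_inner M (x N) (b k) - B k\<bar>) \<longlonglongrightarrow> \<bar>\<alpha> - L2\<bar>"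
      by (intro tendsto_intros \<alpha>(1) B(2))
    then have "\<bar>\<alpha> - L2\<bar> \<le> sqrt (d N * R)" by (rule tendsto_upperbound) (simp_all add: xb)
    moreover have "sqrt (d N * R) < \<epsilon>" using J2 unfolding N_def by simp
    ultimately show ?thesis using \<alpha>(2) by linarith
  qed
  show ?thesis
    using close[of "\<bar>L1 - L2\<bar> / 4"] by (cases "L1 = L2") auto
qed

lemma integrable_normal_density_square:
  assumes "0 < \<sigma>"
  shows "integrable lborel (\<lambda>x. normal_density \<mu> \<sigma> x * x\<^sup>2)"
proof -
  have "integrable lborel (\<lambda>x. normal_density \<mu> \<sigma> x * (x - \<mu>) ^ 2
      + 2 * \<mu> * (normal_density \<mu> \<sigma> x * (x - \<mu>) ^ 1) + \<mu>\<^sup>2 * (normal_density \<mu> \<sigma> x * (x - \<mu>) ^ 0))"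
    using assms
    by (intro Bochner_Integration.integrable_add integrable_mult_right integrable_normal_moment)
  moreover have "(\<lambda>x. normal_density \<mu> \<sigma> x * (x - \<mu>) ^ 2
      + 2 * \<mu> * (normal_density \<mu> \<sigma> x * (x - \<mu>) ^ 1) + \<mu>\<^sup>2 * (normal_density \<mu> \<sigma> x * (x - \<mu>) ^ 0))
      = (\<lambda>x. normal_density \<mu> \<sigma> x * x\<^sup>2)"
    by (auto simp: power2_eq_square algebra_simps)
  ultimately show ?thesis by simp
qed

text \<open>
  This is the only use of the Gaussian hypothesis. It matters because the covariance hypothesis is
  a Bochner integral, which would silently be 0 for a non-integrable product.
\<close>

lemma square_integrable_gaussian_process:
  assumes "prob_space M" "gaussian_process M I Y" "t \<in> I"
  shows "square_integrable M (Y t)"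
proof -
  have meas: "Y t \<in> borel_measurable M" using assms(2,3) unfolding gaussian_process_def by blast
  have "(\<exists>a. AE \<omega> in M. Y t \<omega> = a) \<or>
      (\<exists>\<mu> \<sigma>. \<sigma> > 0 \<and> distributed M lborel (Y t) (normal_density \<mu> \<sigma>))"
    using assms(2,3) unfolding gaussian_process_def
    by (elim conjE allE[of _ "{t}"] allE[of _ "\<lambda>_. 1"]) simp
  then have "integrable M (\<lambda>\<omega>. (Y t \<omega>)\<^sup>2)"
  proof (elim disjE exE conjE)
    interpret prob_space M by (rule assms(1))
    fix a assume "AE \<omega> in M. Y t \<omega> = a"
    then have "AE \<omega> in M. (Y t \<omega>)\<^sup>2 = a\<^sup>2" by eventually_elim simp
    then show ?thesis using meas by (subst integrable_cong_AE[where g = "\<lambda>_. a\<^sup>2"]) auto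
  next
    fix \<mu> \<sigma> assume "0 < \<sigma>" "distributed M lborel (Y t) (normal_density \<mu> \<sigma>)"
    then show ?thesis
      using distributed_integrable[of M lborel "Y t" "normal_density \<mu> \<sigma>" "\<lambda>x. x\<^sup>2"]
        integrable_normal_density_square by simp
  qed
  then show ?thesis using meas unfolding square_integrable_def by simp
qed

lemma islimpt_interval:
  fixes I :: "real set"
  assumes "is_interval I" "p \<in> I" "q \<in> I" "p \<noteq> q" "x \<in> I"
  shows "x islimpt I"
  using assms by (intro connected_imp_perfect is_interval_connected) auto

lemma difference_quotient_tendsto:
  assumes "(f has_real_derivative D) (at x within S)" "y \<longlonglongrightarrow> x" "\<And>n. y n \<in> S - {x}"
  shows "(\<lambda>n. (f (y n) - f x) / (y n - x)) \<longlonglongrightarrow> D"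
proof -
  have "filterlim y (at x within S) sequentially"
    unfolding filterlim_at using assms(2,3) by auto
  with assms(1) show ?thesis
    unfolding has_field_derivative_iff by (rule filterlim_compose)
qed

lemma second_difference_quotient_tendsto:
  assumes "((\<lambda>y. F x y) has_real_derivative D) (at q within S)"
    and "((\<lambda>y. F x' y) has_real_derivative D') (at q within S)"
    and "v \<longlonglongrightarrow> q" "\<And>m. v m \<in> S - {q}"
  shows "(\<lambda>m. (F x (v m) - F x q - F x' (v m) + F x' q) / (h * (v m - q))) \<longlonglongrightarrow> (D - D') / h"
proof -
  have "(\<lambda>m. ((F x (v m) - F x q) / (v m - q) - (F x' (v m) - F x' q) / (v m - q)) / h)
      \<longlonglongrightarrow> (D - D') / h"
    unfolding divide_inverse[of _ h] using assms
    by (intro tendsto_mult_right tendsto_diff difference_quotient_tendsto) auto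
  moreover have "((F x (v m) - F x q) / (v m - q) - (F x' (v m) - F x' q) / (v m - q)) / h =
      (F x (v m) - F x q - F x' (v m) + F x' q) / (h * (v m - q))" for m
    by (simp add: diff_divide_distrib[symmetric] divide_divide_eq_left algebra_simps)
  ultimately show ?thesis by simp
qed

lemma derivatives_of_symmetric_function_eq:
  fixes K :: "real \<Rightarrow> real \<Rightarrow> real"
  assumes "u islimpt I" "u \<in> I" and sym: "\<And>x y. x \<in> I \<Longrightarrow> y \<in> I \<Longrightarrow> K x y = K y x"
    and "((\<lambda>x. K x v) has_real_derivative D) (at u within I)"
    and "((\<lambda>y. K v y) has_real_derivative D') (at u within I)" and "v \<in> I"
  shows "D = D'"
proof (rule has_field_derivative_unique)
  show "((\<lambda>x. K x v) has_real_derivative D) (at u within I)" by fact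
  show "((\<lambda>x. K x v) has_real_derivative D') (at u within I)"
    using assms(5) zero_less_one assms(2)
    by (rule has_field_derivative_transform_within) (simp add: sym \<open>v \<in> I\<close>)
  show "at u within I \<noteq> bot" using assms(1) by (simp add: trivial_limit_within)
qed

lemma abs_second_difference_le:
  fixes F G H :: "real \<Rightarrow> real \<Rightarrow> real"
  assumes I: "is_interval I" and "u \<in> I" "v \<in> I"
    and G: "\<And>x y. x \<in> I \<Longrightarrow> y \<in> I \<Longrightarrow> ((\<lambda>y. F x y) has_real_derivative G x y) (at y within I)"
    and H: "\<And>x y. x \<in> I \<Longrightarrow> y \<in> I \<Longrightarrow> ((\<lambda>x. G x y) has_real_derivative H x y) (at x within I)"
    and bound: "\<And>x y. x \<in> I \<Longrightarrow> y \<in> I \<Longrightarrow> \<bar>H x y\<bar> \<le> C"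
  shows "\<bar>F u u - F u v - F v u + F v v\<bar> \<le> C * (u - v)\<^sup>2"
proof -
  have "convex I" using I by (rule is_interval_convex)
  have G_diff: "\<bar>G u y - G v y\<bar> \<le> C * \<bar>u - v\<bar>" if "y \<in> I" for y
    using field_differentiable_bound[OF \<open>convex I\<close>, of "\<lambda>x. G x y" "\<lambda>x. H x y" C u v]
      H bound that \<open>u \<in> I\<close> \<open>v \<in> I\<close> by simp
  have "\<bar>(F u u - F v u) - (F u v - F v v)\<bar> \<le> C * \<bar>u - v\<bar> * \<bar>u - v\<bar>"
    using field_differentiable_bound[OF \<open>convex I\<close>,
        of "\<lambda>y. F u y - F v y" "\<lambda>y. G u y - G v y" "C * \<bar>u - v\<bar>" u v]
      G G_diff \<open>u \<in> I\<close> \<open>v \<in> I\<close> by (simp add: DERIV_diff)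
  then show ?thesis by (simp add: power2_eq_square algebra_simps abs_mult_self)
qed

lemma L2_kernel_mixed_derivative_symmetric:
  fixes F G H :: "real \<Rightarrow> real \<Rightarrow> real" and Y :: "real \<Rightarrow> 'a \<Rightarrow> real"
  assumes I: "is_interval I" and pq: "p \<in> I" "q \<in> I" "p \<noteq> q"
    and Y: "\<And>t. t \<in> I \<Longrightarrow> square_integrable M (Y t)"
    and F: "\<And>s t. s \<in> I \<Longrightarrow> t \<in> I \<Longrightarrow> F s t = L2_inner M (Y s) (Y t)"
    and G: "\<And>x y. x \<in> I \<Longrightarrow> y \<in> I \<Longrightarrow> ((\<lambda>y. F x y) has_real_derivative G x y) (at y within I)"
    and H: "\<And>x y. x \<in> I \<Longrightarrow> y \<in> I \<Longrightarrow> ((\<lambda>x. G x y) has_real_derivative H x y) (at x within I)"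
    and bound: "\<And>x y. x \<in> I \<Longrightarrow> y \<in> I \<Longrightarrow> \<bar>H x y\<bar> \<le> C"
  shows "H p q = H q p"
proof -
  obtain u where u: "\<And>n. u n \<in> I - {p}" "u \<longlonglongrightarrow> p"
    using islimpt_interval[OF I pq pq(1)] unfolding islimpt_sequential by blast
  obtain v where v: "\<And>m. v m \<in> I - {q}" "v \<longlonglongrightarrow> q"
    using islimpt_interval[OF I pq pq(2)] unfolding islimpt_sequential by blast
  define a where "a n = (\<lambda>\<omega>. (Y (u n) \<omega> - Y p \<omega>) / (u n - p))" for n
  define b where "b m = (\<lambda>\<omega>. (Y (v m) \<omega> - Y q \<omega>) / (v m - q))" for m
  have F_sym: "F x y = F y x" if "x \<in> I" "y \<in> I" for x y
    using that by (simp add: F L2_inner_def mult.commute)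
  have ab: "L2_inner M (a n) (b m) =
      (F (u n) (v m) - F (u n) q - F p (v m) + F p q) / ((u n - p) * (v m - q))" for n m
    unfolding a_def b_def using u(1) v(1) pq by (simp add: L2_inner_diff_quotients Y F)
  have norm_le: "L2_inner M (\<lambda>\<omega>. (Y x \<omega> - Y y \<omega>) / (x - y)) (\<lambda>\<omega>. (Y x \<omega> - Y y \<omega>) / (x - y)) \<le> C"
    if "x \<in> I" "y \<in> I" "x \<noteq> y" for x y
  proof -
    have "F x x - F x y - F y x + F y y \<le> C * (x - y)\<^sup>2"
      using abs_second_difference_le[OF I that(1,2) G H bound] by simp
    then show ?thesis
      using that by (simp add: L2_inner_diff_quotients Y F[symmetric] power2_eq_square divide_le_eq)
  qed
  show ?thesis
  proof (rule L2_inner_iterated_limits_eq)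
    show "square_integrable M (a n)" "square_integrable M (b m)" for n m
      unfolding a_def b_def using u(1) v(1) pq by (auto intro: square_integrable_diff_quotient Y)
    show "L2_inner M (a n) (a n) \<le> C" "L2_inner M (b m) (b m) \<le> C" for n m
      unfolding a_def b_def using u(1) v(1) pq by (auto intro: norm_le)
    show "(\<lambda>m. L2_inner M (a n) (b m)) \<longlonglongrightarrow> (G (u n) q - G p q) / (u n - p)" for n
      unfolding ab using u(1) v pq
      by (intro second_difference_quotient_tendsto[where S = I] G) auto
    show "(\<lambda>n. (G (u n) q - G p q) / (u n - p)) \<longlonglongrightarrow> H p q"
      using u pq by (intro difference_quotient_tendsto[where S = I] H) auto
    have "L2_inner M (a n) (b m) =
        (F (v m) (u n) - F (v m) p - F q (u n) + F q p) / ((v m - q) * (u n - p))" for n m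
      unfolding ab using u(1) v(1) pq by (simp add: F_sym[of p] F_sym[of "u n"] mult.commute)
    then show "(\<lambda>n. L2_inner M (a n) (b m)) \<longlonglongrightarrow> (G (v m) p - G q p) / (v m - q)" for m
      using u v(1) pq
      by (simp only:) (intro second_difference_quotient_tendsto[where S = I] G, auto)
    show "(\<lambda>m. (G (v m) p - G q p) / (v m - q)) \<longlonglongrightarrow> H q p"
      using v pq by (intro difference_quotient_tendsto[where S = I] H) auto
  qed
qed

lemma covariance_derivative_transpose:
  fixes rd :: "nat \<Rightarrow> nat \<Rightarrow> real \<Rightarrow> real \<Rightarrow> real" and Y :: "real \<Rightarrow> 'a \<Rightarrow> real"
  assumes I: "is_interval I" "s \<in> I" "t \<in> I" "s \<noteq> t"
    and Y: "\<And>u. u \<in> I \<Longrightarrow> square_integrable M (Y u)"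
    and cov: "\<And>u v. u \<in> I \<Longrightarrow> v \<in> I \<Longrightarrow> rd 0 0 u v = L2_inner M (Y u) (Y v)"
    and d10: "\<forall>s\<in>I. \<forall>t\<in>I. ((\<lambda>x. rd 0 0 x t) has_real_derivative rd 1 0 s t) (at s within I)"
    and d01: "\<forall>s\<in>I. \<forall>t\<in>I. ((\<lambda>y. rd 0 0 s y) has_real_derivative rd 0 1 s t) (at t within I)"
    and d11: "\<forall>s\<in>I. \<forall>t\<in>I. ((\<lambda>x. rd 0 1 x t) has_real_derivative rd 1 1 s t) (at s within I)"
    and bound: "\<forall>s\<in>I. \<forall>t\<in>I. \<bar>rd 1 1 s t\<bar> \<le> C"
    and "a \<le> 1" "b \<le> 1"
  shows "rd a b t s = rd b a s t"
proof -
  have sym: "rd 0 0 u v = rd 0 0 v u" if "u \<in> I" "v \<in> I" for u v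
    using that by (simp add: cov L2_inner_def mult.commute)
  have swap: "rd 1 0 u v = rd 0 1 v u" if "u \<in> I" "v \<in> I" for u v
  proof (rule derivatives_of_symmetric_function_eq[where K = "rd 0 0"])
    show "u islimpt I" by (rule islimpt_interval[OF I that(1)])
    show "((\<lambda>x. rd 0 0 x v) has_real_derivative rd 1 0 u v) (at u within I)" using d10 that by blast
    show "((\<lambda>y. rd 0 0 v y) has_real_derivative rd 0 1 v u) (at u within I)" using d01 that by blast
  qed (use that sym in auto)
  have "rd 1 1 t s = rd 1 1 s t"
  proof (rule L2_kernel_mixed_derivative_symmetric[OF I(1,3,2) _ Y cov])
    show "t \<noteq> s" using I(4) by simp
    show "((\<lambda>y. rd 0 0 x y) has_real_derivative rd 0 1 x y) (at y within I)"
      "((\<lambda>x. rd 0 1 x y) has_real_derivative rd 1 1 x y) (at x within I)"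
      "\<bar>rd 1 1 x y\<bar> \<le> C" if "x \<in> I" "y \<in> I" for x y
      using d01 d11 bound that by auto
  qed
  moreover have "a \<in> {0, 1}" "b \<in> {0, 1}" using \<open>a \<le> 1\<close> \<open>b \<le> 1\<close> by auto
  ultimately show ?thesis using sym swap I by auto
qed

lemma UNIV_4: "(UNIV :: 4 set) = {1, 2, 3, 4}"
  using exhaust_4 by auto

lemma vector_4 [simp]:
  "(vector [x, y, z, w] :: 'a::zero^4) $ 1 = x"
  "(vector [x, y, z, w] :: 'a::zero^4) $ 2 = y"
  "(vector [x, y, z, w] :: 'a::zero^4) $ 3 = z"
  "(vector [x, y, z, w] :: 'a::zero^4) $ 4 = w"
  unfolding vector_def by simp_all

lemma det_4:
  "det (A :: 'a::comm_ring_1^4^4) =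
   A$1$1 * (A$2$2 * A$3$3 * A$4$4 + A$2$3 * A$3$4 * A$4$2 + A$2$4 * A$3$2 * A$4$3
          - A$2$2 * A$3$4 * A$4$3 - A$2$3 * A$3$2 * A$4$4 - A$2$4 * A$3$3 * A$4$2)
 - A$1$2 * (A$2$1 * A$3$3 * A$4$4 + A$2$3 * A$3$4 * A$4$1 + A$2$4 * A$3$1 * A$4$3
          - A$2$1 * A$3$4 * A$4$3 - A$2$3 * A$3$1 * A$4$4 - A$2$4 * A$3$3 * A$4$1)
 + A$1$3 * (A$2$1 * A$3$2 * A$4$4 + A$2$2 * A$3$4 * A$4$1 + A$2$4 * A$3$1 * A$4$2
          - A$2$1 * A$3$4 * A$4$2 - A$2$2 * A$3$1 * A$4$4 - A$2$4 * A$3$2 * A$4$1)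
 - A$1$4 * (A$2$1 * A$3$2 * A$4$3 + A$2$2 * A$3$3 * A$4$1 + A$2$3 * A$3$1 * A$4$2
          - A$2$1 * A$3$3 * A$4$2 - A$2$2 * A$3$1 * A$4$3 - A$2$3 * A$3$2 * A$4$1)"
proof -
  have "finite {2::4, 3, 4}" "1 \<notin> {2::4, 3, 4}" "finite {3::4, 4}" "2 \<notin> {3::4, 4}"
    "finite {4::4}" "3 \<notin> {4::4}" by auto
  then show ?thesis
    unfolding det_def UNIV_4
    by (simp add: sum_over_permutations_insert sign_swap_id permutation_swap_id sign_compose
        permutation_compose sign_id swap_id_eq algebra_simps)
qed

text \<open>
  The rows and columns 1, 3 carry the block (a i) and 2, 4 the block (d i): this is the layout of
  Sigma(s, t), whose coordinates are ordered Y(s), Y(t), Y'(s), Y'(t).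
\<close>

lemma det_interlaced_blocks:
  fixes a1 a2 a3 a4 d1 d2 d3 d4 x1 x2 x3 x4 y1 y2 y3 y4 :: "'a::comm_ring_1"
  shows "det (vector [vector [a1, x1, a2, x2], vector [y1, d1, y2, d2],
      vector [a3, x3, a4, x4], vector [y3, d3, y4, d4]] :: 'a^4^4)
    - (a1 * a4 - a2 * a3) * (d1 * d4 - d2 * d3) =
    - a1*d1*x4*y4 - a1*d4*x3*y2 + a1*d3*x4*y2 + a1*d2*x3*y4 - a4*d4*x1*y1 + x1*x4*y1*y4
    + a3*d4*x1*y2 - x1*x4*y2*y3 - a3*d2*x1*y4 + a4*d2*x1*y3 + a2*d4*x3*y1 - a2*d3*x4*y1
    + a2*d1*x4*y3 - a2*d2*x3*y3 - x2*x3*y1*y4 + a4*d3*x2*y1 + a3*d1*x2*y4 - a4*d1*x2*y3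
    - a3*d3*x2*y2 + x2*x3*y2*y3"
  unfolding det_4 by (simp add: algebra_simps)

lemma abs_det_interlaced_blocks_le:
  fixes a1 a2 a3 a4 d1 d2 d3 d4 x1 x2 x3 x4 y1 y2 y3 y4 C M :: real
  assumes a1: "\<bar>a1\<bar> \<le> C" and a2: "\<bar>a2\<bar> \<le> C" and a3: "\<bar>a3\<bar> \<le> C" and a4: "\<bar>a4\<bar> \<le> C"
    and d1: "\<bar>d1\<bar> \<le> C" and d2: "\<bar>d2\<bar> \<le> C" and d3: "\<bar>d3\<bar> \<le> C" and d4: "\<bar>d4\<bar> \<le> C"
    and x1: "\<bar>x1\<bar> \<le> M" and x2: "\<bar>x2\<bar> \<le> M" and x3: "\<bar>x3\<bar> \<le> M" and x4: "\<bar>x4\<bar> \<le> M"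
    and y1: "\<bar>y1\<bar> \<le> M" and y2: "\<bar>y2\<bar> \<le> M" and y3: "\<bar>y3\<bar> \<le> M" and y4: "\<bar>y4\<bar> \<le> M"
    and "M \<le> C"
  shows "\<bar>det (vector [vector [a1, x1, a2, x2], vector [y1, d1, y2, d2],
      vector [a3, x3, a4, x4], vector [y3, d3, y4, d4]] :: real^4^4)
    - (a1 * a4 - a2 * a3) * (d1 * d4 - d2 * d3)\<bar> \<le> 20 * C\<^sup>2 * M\<^sup>2"
proof -
  have monomial: "\<bar>w * z * u * v\<bar> \<le> C\<^sup>2 * M\<^sup>2" if "\<bar>w\<bar> \<le> C" "\<bar>z\<bar> \<le> C" "\<bar>u\<bar> \<le> M" "\<bar>v\<bar> \<le> M"
    for w z u v :: real
  proof -
    have "\<bar>w * z * u * v\<bar> = \<bar>w\<bar> * \<bar>z\<bar> * (\<bar>u\<bar> * \<bar>v\<bar>)" by (simp add: abs_mult)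
    also have "\<dots> \<le> C * C * (M * M)" using that by (intro mult_mono) auto
    finally show ?thesis by (simp add: power2_eq_square)
  qed
  have x1C: "\<bar>x1\<bar> \<le> C" and x2C: "\<bar>x2\<bar> \<le> C" and x3C: "\<bar>x3\<bar> \<le> C" and x4C: "\<bar>x4\<bar> \<le> C"
    using x1 x2 x3 x4 \<open>M \<le> C\<close> by auto
  show ?thesis
    unfolding det_interlaced_blocks
    using monomial[OF a1 d1 x4 y4] monomial[OF a1 d4 x3 y2] monomial[OF a1 d3 x4 y2]
      monomial[OF a1 d2 x3 y4] monomial[OF a4 d4 x1 y1] monomial[OF x1C x4C y1 y4]
      monomial[OF a3 d4 x1 y2] monomial[OF x1C x4C y2 y3] monomial[OF a3 d2 x1 y4]
      monomial[OF a4 d2 x1 y3] monomial[OF a2 d4 x3 y1] monomial[OF a2 d3 x4 y1]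
      monomial[OF a2 d1 x4 y3] monomial[OF a2 d2 x3 y3] monomial[OF x2C x3C y1 y4]
      monomial[OF a4 d3 x2 y1] monomial[OF a3 d1 x2 y4] monomial[OF a4 d1 x2 y3]
      monomial[OF a3 d3 x2 y2] monomial[OF x2C x3C y2 y3]
    unfolding abs_le_iff by linarith
qed

lemma abs_le_Mtau:
  assumes bound: "\<And>a b s t. a \<le> 1 \<Longrightarrow> b \<le> 1 \<Longrightarrow> s \<in> I \<Longrightarrow> t \<in> I \<Longrightarrow> \<bar>rd a b s t\<bar> \<le> C"
    and "a \<le> 1" "b \<le> 1" "s \<in> I" "s + \<tau> \<in> I"
  shows "\<bar>rd a b s (s + \<tau>)\<bar> \<le> Mtau rd I \<tau>"
  unfolding Mtau_def using assms by (intro cSup_upper bdd_aboveI[of _ C]) blast+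

lemma Mtau_le:
  assumes bound: "\<And>a b s t. a \<le> 1 \<Longrightarrow> b \<le> 1 \<Longrightarrow> s \<in> I \<Longrightarrow> t \<in> I \<Longrightarrow> \<bar>rd a b s t\<bar> \<le> C"
    and "s \<in> I" "s + \<tau> \<in> I"
  shows "Mtau rd I \<tau> \<le> C"
  unfolding Mtau_def using assms by (intro cSup_least) blast+

theorem lemma9:
  fixes M :: "'a measure" and I :: "real set" and Y :: "real \<Rightarrow> 'a \<Rightarrow> real"
    and rd :: "nat \<Rightarrow> nat \<Rightarrow> real \<Rightarrow> real \<Rightarrow> real" and C s \<tau> :: real
  assumes "prob_space M"
    and "is_interval I"
    and "gaussian_process M I Y"
    and centered: "\<forall>t\<in>I. integrable M (Y t) \<and> (\<integral>\<omega>. Y t \<omega> \<partial>M) = 0"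
    and cov: "\<forall>s\<in>I. \<forall>t\<in>I. rd 0 0 s t = (\<integral>\<omega>. Y s \<omega> * Y t \<omega> \<partial>M)"
    and d10: "\<forall>s\<in>I. \<forall>t\<in>I. ((\<lambda>x. rd 0 0 x t) has_real_derivative rd 1 0 s t) (at s within I)"
    and d01: "\<forall>s\<in>I. \<forall>t\<in>I. ((\<lambda>y. rd 0 0 s y) has_real_derivative rd 0 1 s t) (at t within I)"
    and d11: "\<forall>s\<in>I. \<forall>t\<in>I. ((\<lambda>x. rd 0 1 x t) has_real_derivative rd 1 1 s t) (at s within I)"
    and bound: "\<forall>a\<le>1. \<forall>b\<le>1. \<forall>s\<in>I. \<forall>t\<in>I. \<bar>rd a b s t\<bar> \<le> C"
    and "s \<in> I" and "s + \<tau> \<in> I"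
  shows "\<bar>det (Sigma rd s (s + \<tau>)) - det (Omega rd s) * det (Omega rd (s + \<tau>))\<bar>
           \<le> 20 * C\<^sup>2 * (Mtau rd I \<tau>)\<^sup>2"
proof -
  define t where "t = s + \<tau>"
  have I: "is_interval I" "s \<in> I" "t \<in> I" using assms unfolding t_def by auto
  have bound': "\<And>a b u v. a \<le> 1 \<Longrightarrow> b \<le> 1 \<Longrightarrow> u \<in> I \<Longrightarrow> v \<in> I \<Longrightarrow> \<bar>rd a b u v\<bar> \<le> C"
    using bound by blast
  have Mst: "\<bar>rd a b s t\<bar> \<le> Mtau rd I \<tau>" if "a \<le> 1" "b \<le> 1" for a b
    unfolding t_def by (rule abs_le_Mtau[OF bound' that assms(10,11)])
  have Mts: "\<bar>rd a b t s\<bar> \<le> Mtau rd I \<tau>" if "a \<le> 1" "b \<le> 1" for a b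
  proof (cases "s = t")
    case False
    have "rd a b t s = rd b a s t"
    proof (rule covariance_derivative_transpose[OF I False _ _ d10 d01 d11 _ that])
      show "square_integrable M (Y u)" if "u \<in> I" for u
        by (rule square_integrable_gaussian_process[OF assms(1,3) that])
      show "rd 0 0 u v = L2_inner M (Y u) (Y v)" if "u \<in> I" "v \<in> I" for u v
        using cov that unfolding L2_inner_def by blast
    qed (use bound in auto)
    then show ?thesis using Mst[OF that(2,1)] by simp
  qed (use Mst[OF that] in simp)
  have "\<bar>det (Sigma rd s t) - det (Omega rd s) * det (Omega rd t)\<bar> \<le> 20 * C\<^sup>2 * (Mtau rd I \<tau>)\<^sup>2"
    unfolding Sigma_def Omega_def det_2 vector_2
    using Mst Mts bound' I Mtau_le[OF bound' assms(10,11)]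
    by (intro abs_det_interlaced_blocks_le) simp_all
  then show ?thesis unfolding t_def .
qed

end
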